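(* Let $X,Y$ be compact Hausdorff spaces and $\pi\colon X\to Y$ a continuous surjection. Let $f\colon X\setminus I(f)\to X$ and $g\colon Y\setminus I(g)\to Y$ be partially continuous self-maps such that $I(f)\subseteq\pi^{-1}(I(g))$ and $\pi\circ f=g\circ\pi$ on $X\setminus\pi^{-1}(I(g))$. Then $h_{\mathrm{top}}(f)\ge h_{\mathrm{top}}(g)$.
   Context: A partially continuous self-map of a compact space $X$ is a continuous map $f\colon X\setminus I(f)\to X$ with $I(f)$ closed. Entropy: $\xi_0=X$, $\xi_n=\{x\in X\setminus I(f): f(x)\in\xi_{n-1}\}$; the canonical uniform structure has as entourages all neighbourhoods of the diagonal; for symmetric $\mathcal E$ and $x\in\xi_n$, $B^n_{\mathcal E}(x)=\{y\in\xi_n:(f^i(x),f^i(y))\in\mathcal E,0\le i\le n\}$; $S(n,\mathcal E)$ is the maximal size of $E\subset\xi_n$ with $x\notin B^n_{\mathcal E}(y)$ for distinct $x,y\in E$; $h_{\mathrm{top}}(f)=\sup_{\mathcal E}\limsup_n\frac1n\log S(n,\mathcal E)$. *)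

theory Defs
  imports "HOL-Analysis.Analysis"
begin

text \<open>A partially continuous self-map of the space (type) 'a: a map f, continuous on the
  complement of a closed indeterminacy set I.  Values of f on I are irrelevant.\<close>
definition partially_continuous :: "('a::topological_space \<Rightarrow> 'a) \<Rightarrow> 'a set \<Rightarrow> bool" where
  "partially_continuous f I \<longleftrightarrow> closed I \<and> continuous_on (- I) f"

fun xi :: "('a \<Rightarrow> 'a) \<Rightarrow> 'a set \<Rightarrow> nat \<Rightarrow> 'a set" where
  "xi f I 0 = UNIV"
| "xi f I (Suc n) = {x. x \<notin> I \<and> f x \<in> xi f I n}"

text \<open>Entourages of the canonical uniform structure of a compact space:
  all neighbourhoods of the diagonal in X \<times> X.\<close>
definition entourage :: "('a::topological_space \<times> 'a) set \<Rightarrow> bool" where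
  "entourage E \<longleftrightarrow> (\<exists>U. open U \<and> {(x, x) | x. True} \<subseteq> U \<and> U \<subseteq> E)"

definition symmetric_rel :: "('a \<times> 'a) set \<Rightarrow> bool" where
  "symmetric_rel E \<longleftrightarrow> (\<forall>x y. (x, y) \<in> E \<longrightarrow> (y, x) \<in> E)"

definition bowen_ball :: "('a \<Rightarrow> 'a) \<Rightarrow> 'a set \<Rightarrow> nat \<Rightarrow> ('a \<times> 'a) set \<Rightarrow> 'a \<Rightarrow> 'a set" where
  "bowen_ball f I n E x = {y \<in> xi f I n. \<forall>i\<le>n. ((f ^^ i) x, (f ^^ i) y) \<in> E}"

definition separated :: "('a \<Rightarrow> 'a) \<Rightarrow> 'a set \<Rightarrow> nat \<Rightarrow> ('a \<times> 'a) set \<Rightarrow> 'a set \<Rightarrow> bool" where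
  "separated f I n E F \<longleftrightarrow> F \<subseteq> xi f I n \<and>
     (\<forall>x\<in>F. \<forall>y\<in>F. x \<noteq> y \<longrightarrow> x \<notin> bowen_ball f I n E y)"

text \<open>S(n,E): maximal cardinality of an (n,E)-separated set (as an extended real;
  it is a finite number for entourages of a compact space).\<close>
definition sep_num :: "('a \<Rightarrow> 'a) \<Rightarrow> 'a set \<Rightarrow> nat \<Rightarrow> ('a \<times> 'a) set \<Rightarrow> ereal" where
  "sep_num f I n E = (SUP F\<in>{F. finite F \<and> separated f I n E F}. ereal (real (card F)))"

definition elog :: "ereal \<Rightarrow> ereal" where
  "elog x = (if x \<le> 0 then - \<infinity> else if x = \<infinity> then \<infinity> else ereal (ln (real_of_ereal x)))"

definition top_entropy :: "('a::topological_space \<Rightarrow> 'a) \<Rightarrow> 'a set \<Rightarrow> ereal" where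
  "top_entropy f I = (SUP E\<in>{E. entourage E \<and> symmetric_rel E}.
       limsup (\<lambda>n. elog (sep_num f I n E) / ereal (real n)))"

end

theory Submission
  imports Defs
begin

text \<open>A section \<open>s\<close> of the factor map \<open>\<pi>\<close> lifts every \<open>(n, E)\<close>-separated set of \<open>g\<close>
  injectively to an \<open>(n, (\<pi> \<times> \<pi>)\<inverse>(E))\<close>-separated set of \<open>f\<close>: the hypothesis on the
  indeterminacy sets makes the lifted orbits well defined, and they project onto the
  orbits of \<open>g\<close>.  The pulled-back relation is again a symmetric entourage, so every term
  in the supremum defining \<open>h\<^sub>t\<^sub>o\<^sub>p(g)\<close> is dominated by one defining \<open>h\<^sub>t\<^sub>o\<^sub>p(f)\<close>.\<close>

lemma elog_mono: "x \<le> y \<Longrightarrow> elog x \<le> elog y"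
  by (cases x; cases y) (auto simp: elog_def)

lemma entourage_vimage_map_prod:
  assumes "continuous_on UNIV \<pi>" and "entourage E"
  shows "entourage (map_prod \<pi> \<pi> -` E)"
proof -
  obtain U where U: "open U" "{(x, x) | x. True} \<subseteq> U" "U \<subseteq> E"
    using assms(2) unfolding entourage_def by blast
  have "continuous_on UNIV (map_prod \<pi> \<pi>)"
    unfolding map_prod_def split_def
    by (intro continuous_on_Pair continuous_on_compose2[OF assms(1)] continuous_on_fst
        continuous_on_snd) auto
  then have "open (map_prod \<pi> \<pi> -` U)"
    using U(1) by (simp add: continuous_on_open_vimage)
  moreover have "{(x, x) | x. True} \<subseteq> map_prod \<pi> \<pi> -` U"
    and "map_prod \<pi> \<pi> -` U \<subseteq> map_prod \<pi> \<pi> -` E"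
    using U(2,3) by auto
  ultimately show ?thesis
    unfolding entourage_def by blast
qed

lemma symmetric_rel_vimage_map_prod:
  "symmetric_rel E \<Longrightarrow> symmetric_rel (map_prod \<pi> \<pi> -` E)"
  unfolding symmetric_rel_def by auto

locale semiconjugacy =
  fixes \<pi> :: "'a \<Rightarrow> 'b"
    and f :: "'a \<Rightarrow> 'a" and If :: "'a set"
    and g :: "'b \<Rightarrow> 'b" and Ig :: "'b set"
  assumes indeterminacy_subset: "If \<subseteq> \<pi> -` Ig"
    and semiconj: "\<And>x. x \<notin> \<pi> -` Ig \<Longrightarrow> \<pi> (f x) = g (\<pi> x)"
begin

lemma xi_vimage_subset: "\<pi> -` xi g Ig n \<subseteq> xi f If n"
proof (induction n)
  case (Suc n)
  then show ?case
    using indeterminacy_subset semiconj by auto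
qed simp

lemma funpow_semiconj:
  "\<pi> x \<in> xi g Ig n \<Longrightarrow> i \<le> n \<Longrightarrow> \<pi> ((f ^^ i) x) = (g ^^ i) (\<pi> x)"
proof (induction i arbitrary: x n)
  case (Suc i)
  then obtain m where m: "n = Suc m" "i \<le> m"
    by (cases n) auto
  with Suc.prems have "\<pi> x \<notin> Ig" "\<pi> (f x) \<in> xi g Ig m"
    using semiconj by auto
  then show ?case
    using Suc.IH[of "f x" m] semiconj m(2) by (simp add: funpow_Suc_right del: funpow.simps)
qed simp

lemma separated_image_section:
  assumes right_inverse: "\<And>y. \<pi> (s y) = y"
    and F: "separated g Ig n E F"
  shows "separated f If n (map_prod \<pi> \<pi> -` E) (s ` F)"
  unfolding separated_def
proof (intro conjI ballI impI)
  have F_xi: "F \<subseteq> xi g Ig n"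
    using F unfolding separated_def by blast
  then show "s ` F \<subseteq> xi f If n"
    using xi_vimage_subset right_inverse by blast
  fix a b assume "a \<in> s ` F" "b \<in> s ` F" "a \<noteq> b"
  then obtain y z where yz: "y \<in> F" "z \<in> F" "y \<noteq> z" and ab: "a = s y" "b = s z"
    by blast
  have "(g ^^ i) y = \<pi> ((f ^^ i) a)" "(g ^^ i) z = \<pi> ((f ^^ i) b)" if "i \<le> n" for i
    using funpow_semiconj that F_xi yz(1,2) right_inverse ab by auto
  moreover have "y \<notin> bowen_ball g Ig n E z"
    using F yz unfolding separated_def by blast
  ultimately show "a \<notin> bowen_ball f If n (map_prod \<pi> \<pi> -` E) b"
    using F_xi yz(1) unfolding bowen_ball_def by auto
qed

lemma sep_num_le_vimage:
  assumes "surj \<pi>"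
  shows "sep_num g Ig n E \<le> sep_num f If n (map_prod \<pi> \<pi> -` E)"
  unfolding sep_num_def
proof (rule SUP_mono)
  define s where "s = inv \<pi>"
  have right_inverse: "\<pi> (s y) = y" for y
    using assms unfolding s_def by (simp add: surj_f_inv_f)
  fix F assume F: "F \<in> {F. finite F \<and> separated g Ig n E F}"
  have "card (s ` F) = card F"
    using right_inverse by (metis card_image inj_on_inverseI)
  then show "\<exists>F'\<in>{F. finite F \<and> separated f If n (map_prod \<pi> \<pi> -` E) F}.
      ereal (real (card F)) \<le> ereal (real (card F'))"
    using F separated_image_section[OF right_inverse] by (intro bexI[of _ "s ` F"]) auto
qed

end

lemma top_entropy_le:
  fixes \<pi> :: "'a::topological_space \<Rightarrow> 'b::topological_space" and If :: "'a set"
  assumes "semiconjugacy \<pi> f If g Ig" and "continuous_on UNIV \<pi>" and "surj \<pi>"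
  shows "top_entropy g Ig \<le> top_entropy f If"
  unfolding top_entropy_def
proof (rule SUP_mono)
  fix E :: "('b \<times> 'b) set"
  assume E: "E \<in> {E. entourage E \<and> symmetric_rel E}"
  have "limsup (\<lambda>n. elog (sep_num g Ig n E) / ereal (real n))
      \<le> limsup (\<lambda>n. elog (sep_num f If n (map_prod \<pi> \<pi> -` E)) / ereal (real n))"
    by (intro Limsup_mono eventually_mono[OF eventually_gt_at_top[of 0]]
        ereal_divide_right_mono elog_mono semiconjugacy.sep_num_le_vimage[OF assms(1,3)]) simp
  then show "\<exists>E'\<in>{E. entourage E \<and> symmetric_rel E}.
      limsup (\<lambda>n. elog (sep_num g Ig n E) / ereal (real n))
      \<le> limsup (\<lambda>n. elog (sep_num f If n E') / ereal (real n))"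
    using E entourage_vimage_map_prod[OF assms(2)] symmetric_rel_vimage_map_prod by blast
qed

theorem corollary1p17:
  fixes \<pi> :: "'a::t2_space \<Rightarrow> 'b::t2_space"
    and f :: "'a \<Rightarrow> 'a" and If :: "'a set"
    and g :: "'b \<Rightarrow> 'b" and Ig :: "'b set"
  assumes "compact (UNIV :: 'a set)" and "compact (UNIV :: 'b set)"
    and "continuous_on UNIV \<pi>" and "surj \<pi>"
    and "partially_continuous f If" and "partially_continuous g Ig"
    and "If \<subseteq> \<pi> -` Ig"
    and "\<And>x. x \<notin> \<pi> -` Ig \<Longrightarrow> \<pi> (f x) = g (\<pi> x)"
  shows "top_entropy f If \<ge> top_entropy g Ig"
proof -
  have "semiconjugacy \<pi> f If g Ig"
    using assms(7,8) by unfold_locales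
  then show ?thesis
    using assms(3,4) by (rule top_entropy_le)
qed

end
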